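(* Let $W_1$, $W_2$ be monotone complete ordered vector spaces, and assume that $W_1$ carries a faithful normal positive linear functional. Then every sequentially normal positive linear map $\phi: W_1\to W_2$ is normal.
   Context: An ordered vector space $W$ is called monotone complete if every non-empty upper bounded upward directed subset of $W$ has a supremum in $W$. A positive linear functional $\psi$ on $W$ is faithful if $\psi(a)>0$ for every positive $a\neq 0$ in $W$. A positive linear map $\phi:W_1\to W_2$ between monotone complete ordered vector spaces is called normal if $\phi(\sup J)=\sup_{j\in J}\phi(j)$ for every non-empty upper bounded upward directed subset $J$ of $W_1$, and sequentially normal if $\phi(\sup_n j_n)=\sup_n\phi(j_n)$ for every upper bounded increasing sequence $(j_n)$ in $W_1$. (A normal positive linear functional is the case $W_2=\mathbb{R}$.) *)

theory Defs
  imports "HOL-Analysis.Analysis"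
begin

text \<open>Ordered vector spaces are modelled by the type class ordered_real_vector
(real vector space with a partial order compatible with addition and
nonnegative scalar multiplication).\<close>

definition ovs_upper_bound :: "'a::order set \<Rightarrow> 'a \<Rightarrow> bool" where
  "ovs_upper_bound A b \<longleftrightarrow> (\<forall>x\<in>A. x \<le> b)"

definition ovs_bounded_above :: "'a::order set \<Rightarrow> bool" where
  "ovs_bounded_above A \<longleftrightarrow> (\<exists>b. ovs_upper_bound A b)"

definition ovs_is_sup :: "'a::order set \<Rightarrow> 'a \<Rightarrow> bool" where
  "ovs_is_sup A s \<longleftrightarrow> ovs_upper_bound A s \<and> (\<forall>b. ovs_upper_bound A b \<longrightarrow> s \<le> b)"

definition ovs_upward_directed :: "'a::order set \<Rightarrow> bool" where
  "ovs_upward_directed A \<longleftrightarrow> (\<forall>x\<in>A. \<forall>y\<in>A. \<exists>z\<in>A. x \<le> z \<and> y \<le> z)"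

definition monotone_complete :: "'a::ordered_real_vector itself \<Rightarrow> bool" where
  "monotone_complete _ \<longleftrightarrow>
     (\<forall>J::'a set. J \<noteq> {} \<and> ovs_upward_directed J \<and> ovs_bounded_above J \<longrightarrow> (\<exists>s. ovs_is_sup J s))"

definition positive_linear_map ::
  "('a::ordered_real_vector \<Rightarrow> 'b::ordered_real_vector) \<Rightarrow> bool" where
  "positive_linear_map \<phi> \<longleftrightarrow> linear \<phi> \<and> (\<forall>a. 0 \<le> a \<longrightarrow> 0 \<le> \<phi> a)"

definition faithful_functional :: "('a::ordered_real_vector \<Rightarrow> real) \<Rightarrow> bool" where
  "faithful_functional \<psi> \<longleftrightarrow> (\<forall>a. 0 \<le> a \<and> a \<noteq> 0 \<longrightarrow> \<psi> a > 0)"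

definition normal_map ::
  "('a::ordered_real_vector \<Rightarrow> 'b::ordered_real_vector) \<Rightarrow> bool" where
  "normal_map \<phi> \<longleftrightarrow>
     (\<forall>J s. J \<noteq> {} \<and> ovs_upward_directed J \<and> ovs_bounded_above J \<and> ovs_is_sup J s
        \<longrightarrow> ovs_is_sup (\<phi> ` J) (\<phi> s))"

definition seq_normal_map ::
  "('a::ordered_real_vector \<Rightarrow> 'b::ordered_real_vector) \<Rightarrow> bool" where
  "seq_normal_map \<phi> \<longleftrightarrow>
     (\<forall>(j::nat \<Rightarrow> 'a) s. incseq j \<and> ovs_bounded_above (range j) \<and> ovs_is_sup (range j) s
        \<longrightarrow> ovs_is_sup (range (\<lambda>n. \<phi> (j n))) (\<phi> s))"

end

theory Submission
  imports Defs
begin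

text \<open>A faithful normal positive functional \<psi> turns directed suprema into sequential ones.
If \<open>J\<close> is directed with supremum \<open>s\<close>, pick \<open>x\<^sub>n \<in> J\<close> with \<open>\<psi> x\<^sub>n \<rightarrow> \<psi> s\<close> and dominate
them by an increasing sequence \<open>k\<^sub>n\<close> in \<open>J\<close>. Its supremum \<open>t\<close> satisfies \<open>t \<le> s\<close> and
\<open>\<psi> t = \<psi> s\<close>, hence \<open>t = s\<close> by faithfulness. Sequential normality of \<phi> gives
\<open>\<phi> s = sup \<phi> k\<^sub>n\<close>, and as \<open>\<phi> s\<close> bounds \<open>\<phi> ` J\<close>, it is also its supremum.\<close>

lemma positive_linear_map_mono:
  assumes "positive_linear_map f"
  shows "mono f"
proof (rule monoI)
  fix x y :: 'a assume "x \<le> y"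
  then have "0 \<le> f (y - x)" using assms unfolding positive_linear_map_def by simp
  also have "f (y - x) = f y - f x"
    using assms unfolding positive_linear_map_def by (simp add: linear_diff)
  finally show "f x \<le> f y" by simp
qed

lemma faithful_functional_eqI:
  assumes "positive_linear_map \<psi>" "faithful_functional \<psi>" "t \<le> s" "\<psi> s \<le> \<psi> t"
  shows "t = s"
proof (rule ccontr)
  assume "t \<noteq> s"
  then have "0 < \<psi> (s - t)"
    using assms(2,3) unfolding faithful_functional_def by simp
  moreover have "\<psi> (s - t) = \<psi> s - \<psi> t"
    using assms(1) unfolding positive_linear_map_def by (simp add: linear_diff)
  ultimately show False using assms(4) by simp
qed

lemma ovs_is_sup_upper: "ovs_is_sup A s \<Longrightarrow> x \<in> A \<Longrightarrow> x \<le> s"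
  unfolding ovs_is_sup_def ovs_upper_bound_def by blast

lemma ovs_is_sup_least: "ovs_is_sup A s \<Longrightarrow> (\<And>x. x \<in> A \<Longrightarrow> x \<le> b) \<Longrightarrow> s \<le> b"
  unfolding ovs_is_sup_def ovs_upper_bound_def by blast

lemma ovs_is_sup_imp_bounded_above: "ovs_is_sup A s \<Longrightarrow> ovs_bounded_above A"
  unfolding ovs_is_sup_def ovs_bounded_above_def by blast

lemma ovs_is_sup_less_imp_ex_less:
  fixes c :: "'a::linorder"
  assumes "ovs_is_sup A c" "y < c"
  shows "\<exists>x\<in>A. y < x"
  using ovs_is_sup_least[OF assms(1), of y] assms(2) by (meson not_le)

lemma incseq_upward_directed:
  assumes "incseq k"
  shows "ovs_upward_directed (range k)"
  unfolding ovs_upward_directed_def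
proof clarify
  fix m n
  show "\<exists>z\<in>range k. k m \<le> z \<and> k n \<le> z"
    using assms by (intro bexI[of _ "k (max m n)"]) (auto simp: incseq_def)
qed

lemma upward_directed_dominating_incseq:
  assumes "ovs_upward_directed J" "\<And>n. x n \<in> J"
  obtains k where "incseq k" "range k \<subseteq> J" "\<And>n. x n \<le> k n"
proof -
  have "\<exists>k. \<forall>n. (k n \<in> J \<and> x n \<le> k n) \<and> k n \<le> k (Suc n)"
  proof (rule dependent_nat_choice)
    show "\<exists>y. y \<in> J \<and> x 0 \<le> y" using assms(2) by blast
    fix y n assume "y \<in> J \<and> x n \<le> y"
    then show "\<exists>z. (z \<in> J \<and> x (Suc n) \<le> z) \<and> y \<le> z"
      using assms unfolding ovs_upward_directed_def by blast
  qed
  then show ?thesis using that by (auto intro: incseq_SucI)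
qed

lemma monotone_completeD:
  fixes J :: "'a::ordered_real_vector set"
  assumes "monotone_complete TYPE('a)" "J \<noteq> {}" "ovs_upward_directed J" "ovs_bounded_above J"
  obtains s where "ovs_is_sup J s"
  using assms unfolding monotone_complete_def by blast

lemma normal_functional_approximating_seq:
  fixes \<psi> :: "'a::ordered_real_vector \<Rightarrow> real"
  assumes "normal_map \<psi>" "J \<noteq> {}" "ovs_upward_directed J" "ovs_is_sup J s"
  obtains x where "\<And>n. x n \<in> J" "\<And>n. \<psi> s - inverse (Suc n) < \<psi> (x n)"
proof -
  have sup_\<psi>: "ovs_is_sup (\<psi> ` J) (\<psi> s)"
    using assms ovs_is_sup_imp_bounded_above[OF assms(4)] unfolding normal_map_def by blast
  have "\<forall>n::nat. \<exists>y. y \<in> J \<and> \<psi> s - inverse (Suc n) < \<psi> y"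
  proof
    fix n :: nat
    have "\<psi> s - inverse (Suc n) < \<psi> s" by simp
    then have "\<exists>z\<in>\<psi> ` J. \<psi> s - inverse (Suc n) < z"
      by (rule ovs_is_sup_less_imp_ex_less[OF sup_\<psi>])
    then show "\<exists>y. y \<in> J \<and> \<psi> s - inverse (Suc n) < \<psi> y" by auto
  qed
  from choice[OF this] show ?thesis using that by blast
qed

lemma directed_sup_is_sup_of_incseq:
  fixes J :: "'a::ordered_real_vector set" and \<psi> :: "'a \<Rightarrow> real"
  assumes complete: "monotone_complete TYPE('a)"
    and \<psi>: "positive_linear_map \<psi>" "faithful_functional \<psi>" "normal_map \<psi>"
    and J: "J \<noteq> {}" "ovs_upward_directed J" "ovs_is_sup J s"
  obtains k where "incseq k" "range k \<subseteq> J" "ovs_is_sup (range k) s"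
proof -
  obtain x where x: "\<And>n. x n \<in> J" "\<And>n. \<psi> s - inverse (Suc n) < \<psi> (x n)"
    using normal_functional_approximating_seq[OF \<psi>(3) J] by blast
  obtain k where k: "incseq k" "range k \<subseteq> J" "\<And>n. x n \<le> k n"
    using upward_directed_dominating_incseq[OF J(2), of x, OF x(1)] by blast
  have k_le_s: "k n \<le> s" for n
    using k(2) by (intro ovs_is_sup_upper[OF J(3)]) auto
  then have "ovs_bounded_above (range k)"
    unfolding ovs_bounded_above_def ovs_upper_bound_def by blast
  moreover have "range k \<noteq> {}" by simp
  ultimately obtain t where t: "ovs_is_sup (range k) t"
    using monotone_completeD[OF complete _ incseq_upward_directed[OF k(1)]] by blast
  have "t \<le> s"
    using ovs_is_sup_least[OF t] k_le_s by blast
  moreover have "\<psi> s \<le> \<psi> t"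
  proof (rule field_le_epsilon)
    fix e :: real assume "0 < e"
    then obtain n where n: "inverse (Suc n) < e"
      using reals_Archimedean by blast
    have "x n \<le> t"
      using k(3)[of n] ovs_is_sup_upper[OF t, of "k n"] by simp
    then have "\<psi> (x n) \<le> \<psi> t"
      using positive_linear_map_mono[OF \<psi>(1)] by (simp add: monoD)
    then show "\<psi> s \<le> \<psi> t + e"
      using x(2)[of n] n by linarith
  qed
  ultimately have "t = s"
    using faithful_functional_eqI[OF \<psi>(1,2)] by blast
  then show ?thesis
    using that k(1,2) t by blast
qed

lemma ovs_is_sup_image_of_subset:
  assumes f: "mono f" and J: "ovs_is_sup J s" and K: "K \<subseteq> J" "ovs_is_sup (f ` K) (f s)"
  shows "ovs_is_sup (f ` J) (f s)"
  unfolding ovs_is_sup_def ovs_upper_bound_def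
proof (intro conjI allI impI ballI)
  fix y assume "y \<in> f ` J"
  then obtain x where "x \<in> J" "y = f x" by blast
  then show "y \<le> f s" using ovs_is_sup_upper[OF J] f by (simp add: monoD)
next
  fix b assume "\<forall>y\<in>f ` J. y \<le> b"
  then show "f s \<le> b" using ovs_is_sup_least[OF K(2)] K(1) by blast
qed

theorem theorem2:
  fixes \<phi> :: "'a::ordered_real_vector \<Rightarrow> 'b::ordered_real_vector"
  assumes "monotone_complete TYPE('a)"
    and "monotone_complete TYPE('b)"
    and "\<exists>\<psi> :: 'a \<Rightarrow> real. positive_linear_map \<psi> \<and> faithful_functional \<psi> \<and> normal_map \<psi>"
    and "positive_linear_map \<phi>"
    and "seq_normal_map \<phi>"
  shows "normal_map \<phi>"
  unfolding normal_map_def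
proof (intro allI impI)
  fix J :: "'a set" and s assume "J \<noteq> {} \<and> ovs_upward_directed J \<and> ovs_bounded_above J \<and> ovs_is_sup J s"
  then have J: "J \<noteq> {}" "ovs_upward_directed J" "ovs_is_sup J s" by simp_all
  obtain \<psi> :: "'a \<Rightarrow> real" where \<psi>: "positive_linear_map \<psi>" "faithful_functional \<psi>" "normal_map \<psi>"
    using assms(3) by blast
  obtain k where k: "incseq k" "range k \<subseteq> J" "ovs_is_sup (range k) s"
    by (rule directed_sup_is_sup_of_incseq[OF assms(1) \<psi> J])
  have "ovs_is_sup (range (\<lambda>n. \<phi> (k n))) (\<phi> s)"
    using assms(5) k(1,3) ovs_is_sup_imp_bounded_above[OF k(3)] unfolding seq_normal_map_def by blast
  then have "ovs_is_sup (\<phi> ` range k) (\<phi> s)"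
    by (simp add: image_image)
  then show "ovs_is_sup (\<phi> ` J) (\<phi> s)"
    by (rule ovs_is_sup_image_of_subset[OF positive_linear_map_mono[OF assms(4)] J(3) k(2)])
qed

end
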